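(* Let $G$ be an $n$-resource selection game with I.D.-dependent weighting. Then $h^s_j=h^{s'}_j$ for every $j\in[n]$ and every two strong Nash equilibria $s,s'$ of $G$.
   Context: For $n,k\in\mathbb{N}$, an $n$-resource/$k$-player-type resource selection game with I.D.-dependent weighting is a triple $\bigl((f_j)_{j=1}^n;(R^i)_{i=1}^k;(f^i_j)_{i\in[k],j\in R^i}\bigr)$ where each $f_j:[0,\infty)\to\mathbb{R}$ is nondecreasing, each $R^i$ is a nonempty subset of $[n]$, and each $f^i_j:[0,1]\to[0,\infty)$ is increasing (no continuity assumed). A consumption profile is a map $s:[k]\to[0,\infty)^{[n]}$ with $s_j(i)=0$ for $j\notin R^i$ and $\sum_j s_j(i)=1$. The weighted load of resource $j$ is $\mu^s_j=\sum_{i:\,j\in R^i}f^i_j(s_j(i))$ and its cost is $h^s_j=f_j(\mu^s_j)$. $s$ is a Nash equilibrium if for every $i\in[k]$, every $\ell$ with $s_\ell(i)>0$ and every $j\in R^i$, $h^s_\ell\le h^s_j$. For a Nash equilibrium $s$ and $i\in[k]$, let $h^i=h^s_\ell$ for any $\ell$ with $s_\ell(i)>0$. A Nash equilibrium $s$ is strong if there is no consumption profile $s'\ne s$ such that for every $i\in[k]$ and every $\ell$ with $s'_\ell(i)>s_\ell(i)$, $h^{s'}_\ell<h^i$. *)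

theory Defs
  imports Complex_Main
begin

text \<open>Resources are indexed by {1..n}, player types by {1..k}.
  f j : cost function of resource j; R i : resources available to type i;
  w i j : the I.D.-dependent weighting function f^i_j.
  A profile s is a function s i j = s_j(i).\<close>

definition rs_game ::
  "nat \<Rightarrow> nat \<Rightarrow> (nat \<Rightarrow> real \<Rightarrow> real) \<Rightarrow> (nat \<Rightarrow> nat set)
    \<Rightarrow> (nat \<Rightarrow> nat \<Rightarrow> real \<Rightarrow> real) \<Rightarrow> bool" where
  "rs_game n k f R w \<longleftrightarrow>
     (\<forall>j\<in>{1..n}. mono_on {0..} (f j)) \<and>
     (\<forall>i\<in>{1..k}. R i \<noteq> {} \<and> R i \<subseteq> {1..n}) \<and>
     (\<forall>i\<in>{1..k}. \<forall>j\<in>R i. strict_mono_on {0..1} (w i j) \<and>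
                          (\<forall>x\<in>{0..1}. w i j x \<ge> 0))"

definition consumption_profile ::
  "nat \<Rightarrow> nat \<Rightarrow> (nat \<Rightarrow> nat set) \<Rightarrow> (nat \<Rightarrow> nat \<Rightarrow> real) \<Rightarrow> bool" where
  "consumption_profile n k R s \<longleftrightarrow>
     (\<forall>i\<in>{1..k}. (\<forall>j\<in>{1..n}. s i j \<ge> 0) \<and>
                  (\<forall>j\<in>{1..n}. j \<notin> R i \<longrightarrow> s i j = 0) \<and>
                  (\<Sum>j\<in>{1..n}. s i j) = 1)"

definition load ::
  "nat \<Rightarrow> (nat \<Rightarrow> nat set) \<Rightarrow> (nat \<Rightarrow> nat \<Rightarrow> real \<Rightarrow> real)
    \<Rightarrow> (nat \<Rightarrow> nat \<Rightarrow> real) \<Rightarrow> nat \<Rightarrow> real" where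
  "load k R w s j = (\<Sum>i\<in>{i\<in>{1..k}. j \<in> R i}. w i j (s i j))"

definition cost ::
  "nat \<Rightarrow> (nat \<Rightarrow> real \<Rightarrow> real) \<Rightarrow> (nat \<Rightarrow> nat set) \<Rightarrow> (nat \<Rightarrow> nat \<Rightarrow> real \<Rightarrow> real)
    \<Rightarrow> (nat \<Rightarrow> nat \<Rightarrow> real) \<Rightarrow> nat \<Rightarrow> real" where
  "cost k f R w s j = f j (load k R w s j)"

definition nash_eq ::
  "nat \<Rightarrow> nat \<Rightarrow> (nat \<Rightarrow> real \<Rightarrow> real) \<Rightarrow> (nat \<Rightarrow> nat set)
    \<Rightarrow> (nat \<Rightarrow> nat \<Rightarrow> real \<Rightarrow> real) \<Rightarrow> (nat \<Rightarrow> nat \<Rightarrow> real) \<Rightarrow> bool" where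
  "nash_eq n k f R w s \<longleftrightarrow> consumption_profile n k R s \<and>
     (\<forall>i\<in>{1..k}. \<forall>l\<in>{1..n}. s i l > 0 \<longrightarrow>
        (\<forall>j\<in>R i. cost k f R w s l \<le> cost k f R w s j))"

text \<open>h^i: the common cost of the resources used by type i (well defined at a NE).\<close>
definition type_cost ::
  "nat \<Rightarrow> nat \<Rightarrow> (nat \<Rightarrow> real \<Rightarrow> real) \<Rightarrow> (nat \<Rightarrow> nat set)
    \<Rightarrow> (nat \<Rightarrow> nat \<Rightarrow> real \<Rightarrow> real) \<Rightarrow> (nat \<Rightarrow> nat \<Rightarrow> real) \<Rightarrow> nat \<Rightarrow> real" where
  "type_cost n k f R w s i = cost k f R w s (SOME l. l \<in> {1..n} \<and> s i l > 0)"

definition strong_nash_eq ::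
  "nat \<Rightarrow> nat \<Rightarrow> (nat \<Rightarrow> real \<Rightarrow> real) \<Rightarrow> (nat \<Rightarrow> nat set)
    \<Rightarrow> (nat \<Rightarrow> nat \<Rightarrow> real \<Rightarrow> real) \<Rightarrow> (nat \<Rightarrow> nat \<Rightarrow> real) \<Rightarrow> bool" where
  "strong_nash_eq n k f R w s \<longleftrightarrow> nash_eq n k f R w s \<and>
     \<not> (\<exists>s'. consumption_profile n k R s' \<and>
            (\<exists>i\<in>{1..k}. \<exists>j\<in>{1..n}. s' i j \<noteq> s i j) \<and>
            (\<forall>i\<in>{1..k}. \<forall>l\<in>{1..n}. s' i l > s i l \<longrightarrow>
                 cost k f R w s' l < type_cost n k f R w s i))"

end

theory Submission
  imports Defs
begin

text \<open>
  Let s be a strong Nash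
  equilibrium and t any Nash equilibrium, and suppose some resource j is strictly
  cheaper under t than under s.  Call a type i an improver if its equilibrium cost
  under t is below that under s, and let the coalition of improvers switch from s to
  their t-strategies while everyone else keeps s.  Two observations make this a
  profitable coalitional deviation from s:
  (1) a non-improver never uses under s a resource that an improver uses under t,
      so on such a resource the load of the switched profile is at most its t-load
      and, by monotonicity of f, every resource an improver moves weight to costs at
      most its t-equilibrium cost, which is below its s-equilibrium cost;
  (2) since j's load drops from s to t, some type lowers its consumption of j, and
      this type is an improver, so the deviation is nontrivial.
  This contradicts strongness of s.  Applying the argument in both directions to two
  strong equilibria yields equal costs on every resource.
\<close>

lemma profile_entry_bounds:
  assumes "consumption_profile n k R s" "i \<in> {1..k}" "j \<in> {1..n}"
  shows "0 \<le> s i j \<and> s i j \<le> 1"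
proof -
  have nonneg: "\<forall>j\<in>{1..n}. s i j \<ge> 0" and total: "(\<Sum>j\<in>{1..n}. s i j) = 1"
    using assms unfolding consumption_profile_def by auto
  have "s i j \<le> (\<Sum>j\<in>{1..n}. s i j)"
    by (rule member_le_sum) (use nonneg assms(3) in auto)
  then show ?thesis using nonneg total assms(3) by auto
qed

text \<open>Every type uses some resource, so its equilibrium cost is well defined.\<close>
lemma profile_has_support:
  assumes "consumption_profile n k R s" "i \<in> {1..k}"
  shows "\<exists>l\<in>{1..n}. s i l > 0"
proof (rule ccontr)
  assume "\<not> ?thesis"
  then have "\<forall>l\<in>{1..n}. s i l \<le> 0" by auto
  then have "(\<Sum>j\<in>{1..n}. s i j) \<le> 0" by (intro sum_nonpos) auto
  then show False using assms unfolding consumption_profile_def by auto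
qed

lemma profile_support_available:
  assumes "consumption_profile n k R s" "i \<in> {1..k}" "l \<in> {1..n}" "s i l > 0"
  shows "l \<in> R i"
  using assms unfolding consumption_profile_def by force

lemma type_cost_eq_cost:
  assumes nash: "nash_eq n k f R w s" and i: "i \<in> {1..k}"
    and l: "l \<in> {1..n}" "s i l > 0"
  shows "type_cost n k f R w s i = cost k f R w s l"
proof -
  have prof: "consumption_profile n k R s" using nash unfolding nash_eq_def by auto
  define l0 where "l0 = (SOME l. l \<in> {1..n} \<and> s i l > 0)"
  have l0: "l0 \<in> {1..n} \<and> s i l0 > 0"
    unfolding l0_def by (rule someI_ex) (use profile_has_support[OF prof i] in auto)
  have "l \<in> R i" "l0 \<in> R i" using profile_support_available[OF prof i] l l0 by auto
  then have "cost k f R w s l0 \<le> cost k f R w s l" "cost k f R w s l \<le> cost k f R w s l0"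
    using nash i l l0 unfolding nash_eq_def by auto
  then show ?thesis unfolding type_cost_def l0_def[symmetric] by auto
qed

lemma type_cost_le_cost:
  assumes nash: "nash_eq n k f R w s" and i: "i \<in> {1..k}" and j: "j \<in> R i"
  shows "type_cost n k f R w s i \<le> cost k f R w s j"
proof -
  have prof: "consumption_profile n k R s" using nash unfolding nash_eq_def by auto
  obtain l where l: "l \<in> {1..n}" "s i l > 0" using profile_has_support[OF prof i] by auto
  have "cost k f R w s l \<le> cost k f R w s j" using nash i l j unfolding nash_eq_def by auto
  then show ?thesis using type_cost_eq_cost[OF nash i l] by simp
qed

lemma weight_strict_mono:
  assumes "rs_game n k f R w" "i \<in> {1..k}" "j \<in> R i"
  shows "strict_mono_on {0..1} (w i j)"
  using assms unfolding rs_game_def by blast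

lemma load_nonneg:
  assumes game: "rs_game n k f R w" and prof: "consumption_profile n k R s"
  shows "load k R w s j \<ge> 0"
  unfolding load_def
proof (rule sum_nonneg)
  fix i assume "i \<in> {i \<in> {1..k}. j \<in> R i}"
  then have i: "i \<in> {1..k}" "j \<in> R i" by auto
  then have "j \<in> {1..n}" using game unfolding rs_game_def by blast
  then have "s i j \<in> {0..1}" using profile_entry_bounds[OF prof i(1)] by auto
  then show "w i j (s i j) \<ge> 0" using game i unfolding rs_game_def by auto
qed

lemma cost_mono_load:
  assumes game: "rs_game n k f R w"
    and prof: "consumption_profile n k R s" "consumption_profile n k R t"
    and j: "j \<in> {1..n}" and le: "load k R w s j \<le> load k R w t j"
  shows "cost k f R w s j \<le> cost k f R w t j"
proof -
  have "mono_on {0..} (f j)" using game j unfolding rs_game_def by auto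
  then show ?thesis
    unfolding cost_def
    by (rule mono_onD) (use le load_nonneg[OF game prof(1)] load_nonneg[OF game prof(2)] in auto)
qed

definition improvers ::
  "nat \<Rightarrow> nat \<Rightarrow> (nat \<Rightarrow> real \<Rightarrow> real) \<Rightarrow> (nat \<Rightarrow> nat set) \<Rightarrow> (nat \<Rightarrow> nat \<Rightarrow> real \<Rightarrow> real)
    \<Rightarrow> (nat \<Rightarrow> nat \<Rightarrow> real) \<Rightarrow> (nat \<Rightarrow> nat \<Rightarrow> real) \<Rightarrow> nat set" where
  "improvers n k f R w s t =
     {i \<in> {1..k}. type_cost n k f R w t i < type_cost n k f R w s i}"

definition switch :: "nat set \<Rightarrow> (nat \<Rightarrow> nat \<Rightarrow> real) \<Rightarrow> (nat \<Rightarrow> nat \<Rightarrow> real) \<Rightarrow> nat \<Rightarrow> nat \<Rightarrow> real"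
  where "switch M t s = (\<lambda>i. if i \<in> M then t i else s i)"

lemma switch_profile:
  assumes "consumption_profile n k R s" "consumption_profile n k R t"
  shows "consumption_profile n k R (switch M t s)"
  using assms unfolding consumption_profile_def switch_def by auto

lemma improvers_closed:
  assumes nash: "nash_eq n k f R w s" "nash_eq n k f R w t"
    and imp: "i \<in> improvers n k f R w s t" and l: "l \<in> {1..n}" and ti: "t i l > 0"
    and i': "i' \<in> {1..k}" and si': "s i' l > 0"
  shows "i' \<in> improvers n k f R w s t"
proof -
  have i: "i \<in> {1..k}" using imp unfolding improvers_def by auto
  have prof: "consumption_profile n k R s" "consumption_profile n k R t"
    using nash unfolding nash_eq_def by auto
  have "type_cost n k f R w t i' \<le> cost k f R w t l"
    using type_cost_le_cost[OF nash(2) i' profile_support_available[OF prof(1) i' l si']] .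
  also have "\<dots> = type_cost n k f R w t i" using type_cost_eq_cost[OF nash(2) i l ti] by simp
  also have "\<dots> < type_cost n k f R w s i" using imp unfolding improvers_def by auto
  also have "\<dots> \<le> cost k f R w s l"
    using type_cost_le_cost[OF nash(1) i profile_support_available[OF prof(2) i l ti]] .
  also have "\<dots> = type_cost n k f R w s i'" using type_cost_eq_cost[OF nash(1) i' l si'] by simp
  finally show ?thesis using i' unfolding improvers_def by auto
qed

lemma switch_load_le:
  assumes game: "rs_game n k f R w"
    and nash: "nash_eq n k f R w s" "nash_eq n k f R w t"
    and imp: "i \<in> improvers n k f R w s t" and l: "l \<in> {1..n}" and ti: "t i l > 0"
  shows "load k R w (switch (improvers n k f R w s t) t s) l \<le> load k R w t l"
  unfolding load_def
proof (rule sum_mono)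
  let ?M = "improvers n k f R w s t"
  have prof: "consumption_profile n k R s" "consumption_profile n k R t"
    using nash unfolding nash_eq_def by auto
  fix i' assume "i' \<in> {i \<in> {1..k}. l \<in> R i}"
  then have i': "i' \<in> {1..k}" "l \<in> R i'" by auto
  show "w i' l (switch ?M t s i' l) \<le> w i' l (t i' l)"
  proof (cases "i' \<in> ?M")
    case True
    then show ?thesis unfolding switch_def by simp
  next
    case False
    then have "s i' l = 0"
      using improvers_closed[OF nash imp l ti i'(1)] profile_entry_bounds[OF prof(1) i'(1) l]
      by force
    moreover have "w i' l 0 \<le> w i' l (t i' l)"
      by (rule strict_mono_on_leD[OF weight_strict_mono[OF game i']])
        (use profile_entry_bounds[OF prof(2) i'(1) l] in auto)
    ultimately show ?thesis using False unfolding switch_def by simp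
  qed
qed

lemma switch_profitable:
  assumes game: "rs_game n k f R w"
    and nash: "nash_eq n k f R w s" "nash_eq n k f R w t"
    and i: "i \<in> {1..k}" and l: "l \<in> {1..n}"
    and gt: "switch (improvers n k f R w s t) t s i l > s i l"
  shows "cost k f R w (switch (improvers n k f R w s t) t s) l < type_cost n k f R w s i"
proof -
  let ?M = "improvers n k f R w s t"
  have prof: "consumption_profile n k R s" "consumption_profile n k R t"
    using nash unfolding nash_eq_def by auto
  have imp: "i \<in> ?M" using gt unfolding switch_def by (auto split: if_splits)
  have ti: "t i l > 0" using gt imp profile_entry_bounds[OF prof(1) i l] unfolding switch_def by auto
  have "cost k f R w (switch ?M t s) l \<le> cost k f R w t l"
    by (rule cost_mono_load[OF game switch_profile[OF prof] prof(2) l switch_load_le[OF game nash imp l ti]])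
  also have "\<dots> = type_cost n k f R w t i" using type_cost_eq_cost[OF nash(2) i l ti] by simp
  also have "\<dots> < type_cost n k f R w s i" using imp unfolding improvers_def by auto
  finally show ?thesis .
qed

lemma cheaper_resource_has_improver:
  assumes game: "rs_game n k f R w"
    and nash: "nash_eq n k f R w s" "nash_eq n k f R w t"
    and j: "j \<in> {1..n}" and cheaper: "cost k f R w t j < cost k f R w s j"
  obtains i where "i \<in> improvers n k f R w s t" "t i j < s i j"
proof -
  have prof: "consumption_profile n k R s" "consumption_profile n k R t"
    using nash unfolding nash_eq_def by auto
  have load_lt: "load k R w t j < load k R w s j"
    by (meson cheaper cost_mono_load[OF game prof j] leD leI)
  obtain i where i: "i \<in> {1..k}" "j \<in> R i" and wlt: "w i j (t i j) < w i j (s i j)"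
  proof (rule ccontr)
    assume "\<not> thesis"
    then have "\<forall>i\<in>{i \<in> {1..k}. j \<in> R i}. w i j (s i j) \<le> w i j (t i j)"
      using that by force
    then have "load k R w s j \<le> load k R w t j" unfolding load_def by (intro sum_mono) auto
    then show False using load_lt by simp
  qed
  have lt: "t i j < s i j"
  proof (rule ccontr)
    assume not_lt: "\<not> ?thesis"
    have "w i j (s i j) \<le> w i j (t i j)"
      by (rule strict_mono_on_leD[OF weight_strict_mono[OF game i]])
        (use not_lt profile_entry_bounds[OF prof(1) i(1) j] profile_entry_bounds[OF prof(2) i(1) j] in auto)
    then show False using wlt by simp
  qed
  then have si: "s i j > 0" using profile_entry_bounds[OF prof(2) i(1) j] by auto
  have "type_cost n k f R w t i \<le> cost k f R w t j" using type_cost_le_cost[OF nash(2) i] .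
  also have "\<dots> < cost k f R w s j" by (rule cheaper)
  also have "\<dots> = type_cost n k f R w s i" using type_cost_eq_cost[OF nash(1) i(1) j si] by simp
  finally have "i \<in> improvers n k f R w s t" using i unfolding improvers_def by auto
  with lt show ?thesis using that by blast
qed

lemma strong_nash_not_undercut:
  assumes game: "rs_game n k f R w" and strong: "strong_nash_eq n k f R w s"
    and nash_t: "nash_eq n k f R w t" and j: "j \<in> {1..n}"
  shows "cost k f R w s j \<le> cost k f R w t j"
proof (rule ccontr)
  assume "\<not> ?thesis"
  then have cheaper: "cost k f R w t j < cost k f R w s j" by simp
  have nash: "nash_eq n k f R w s" "nash_eq n k f R w t"
    using strong nash_t unfolding strong_nash_eq_def by auto
  have prof: "consumption_profile n k R s" "consumption_profile n k R t"
    using nash unfolding nash_eq_def by auto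
  let ?u = "switch (improvers n k f R w s t) t s"
  obtain i where imp: "i \<in> improvers n k f R w s t" and lt: "t i j < s i j"
    using cheaper_resource_has_improver[OF game nash j cheaper] .
  have "i \<in> {1..k}" using imp unfolding improvers_def by auto
  moreover have "?u i j \<noteq> s i j" using imp lt unfolding switch_def by simp
  ultimately have changed: "\<exists>i\<in>{1..k}. \<exists>j\<in>{1..n}. ?u i j \<noteq> s i j" using j by blast
  have profitable:
    "\<forall>i\<in>{1..k}. \<forall>l\<in>{1..n}. ?u i l > s i l \<longrightarrow> cost k f R w ?u l < type_cost n k f R w s i"
    by (intro ballI impI switch_profitable[OF game nash])
  have "consumption_profile n k R ?u \<and> (\<exists>i\<in>{1..k}. \<exists>j\<in>{1..n}. ?u i j \<noteq> s i j) \<and>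
      (\<forall>i\<in>{1..k}. \<forall>l\<in>{1..n}. ?u i l > s i l \<longrightarrow> cost k f R w ?u l < type_cost n k f R w s i)"
    using switch_profile[OF prof] changed profitable by (intro conjI)
  then show False using strong unfolding strong_nash_eq_def by blast
qed

theorem mainTheorem6:
  fixes n k :: nat and f :: "nat \<Rightarrow> real \<Rightarrow> real" and R :: "nat \<Rightarrow> nat set"
    and w :: "nat \<Rightarrow> nat \<Rightarrow> real \<Rightarrow> real" and s s' :: "nat \<Rightarrow> nat \<Rightarrow> real"
  assumes "rs_game n k f R w"
    and "strong_nash_eq n k f R w s"
    and "strong_nash_eq n k f R w s'"
  shows "\<forall>j\<in>{1..n}. cost k f R w s j = cost k f R w s' j"
proof
  fix j assume j: "j \<in> {1..n}"
  have nash: "nash_eq n k f R w s" "nash_eq n k f R w s'"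
    using assms unfolding strong_nash_eq_def by auto
  show "cost k f R w s j = cost k f R w s' j"
    using strong_nash_not_undercut[OF assms(1,2) nash(2) j]
      strong_nash_not_undercut[OF assms(1,3) nash(1) j] by simp
qed

end
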